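(* Let $g(t)$, $t\in[0,T)$, be the maximal Ricci flow solution on $S^1\times S^3$ of the form $g(t)=\phi^2dz^2+a^2\omega^1\otimes\omega^1+b^2\omega^2\otimes\omega^2+c^2\omega^3\otimes\omega^3$ starting from initial data with $0<a\le b\le c$, and let $\hat c(t)=\max_s c(s,t)$. Suppose that at time $t=0$ we have $1\le\max_s\left(\frac{c}{a}\right)\le\lambda$ for some constant $\lambda\ge1$. Then for all $(z,t)\in S^1\times[0,T)$, $$1\le\frac{c^2}{a^2}\le e^{(\lambda^2-1)}(\lambda^2-1)\left(1-\frac{4t}{\hat c(0)^2}\right)^2+1.$$
   Context: $S^3=SU(2)$ carries a global left-invariant frame $E_1,E_2,E_3$ with $[E_i,E_j]=-2\epsilon_{ijk}E_k$ and dual coframe $\omega^i$; $z\in S^1=[0,2\pi)$, $\phi,a,b,c$ positive smooth $2\pi$-periodic functions; $s$ is the arclength coordinate $ds=\phi\,dz$. The Ricci flow $\partial_tg=-2\mathrm{Ric}(g)$ preserves this form. *)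

theory Defs
  imports "HOL-Analysis.Analysis"
begin

text \<open>Functions of (z,t) are curried: f z t.  A function is smooth on
  R x [0,T) if all iterated partial derivatives D i j (z-order i, t-order j)
  exist (one-sided in t at t = 0) and are continuous.\<close>

definition smooth_zt :: "real \<Rightarrow> (real \<Rightarrow> real \<Rightarrow> real) \<Rightarrow> bool" where
  "smooth_zt T f \<longleftrightarrow>
     (\<exists>D :: nat \<Rightarrow> nat \<Rightarrow> real \<Rightarrow> real \<Rightarrow> real. D 0 0 = f \<and>
        (\<forall>i j. continuous_on (UNIV \<times> {0..<T}) (\<lambda>p. D i j (fst p) (snd p)) \<and>
           (\<forall>z. \<forall>t\<in>{0..<T}.
              ((\<lambda>y. D i j y t) has_real_derivative D (Suc i) j z t) (at z) \<and>
              ((\<lambda>\<tau>. D i j z \<tau>) has_real_derivative D i (Suc j) z t) (at t within {0..<T}))))"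

text \<open>Partial derivative in z, and arclength derivative d/ds = (1/phi) d/dz.\<close>
definition pz :: "(real \<Rightarrow> real \<Rightarrow> real) \<Rightarrow> real \<Rightarrow> real \<Rightarrow> real" where
  "pz f z t = deriv (\<lambda>y. f y t) z"

definition ps :: "(real \<Rightarrow> real \<Rightarrow> real) \<Rightarrow> (real \<Rightarrow> real \<Rightarrow> real) \<Rightarrow> real \<Rightarrow> real \<Rightarrow> real" where
  "ps \<phi> f z t = pz f z t / \<phi> z t"

definition pss :: "(real \<Rightarrow> real \<Rightarrow> real) \<Rightarrow> (real \<Rightarrow> real \<Rightarrow> real) \<Rightarrow> real \<Rightarrow> real \<Rightarrow> real" where
  "pss \<phi> f = ps \<phi> (ps \<phi> f)"

text \<open>Ricci flow for g = phi^2 dz^2 + a^2 w1^2 + b^2 w2^2 + c^2 w3^2 on S^1 x S^3,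
  with [E_i,E_j] = -2 eps_ijk E_k.  Equivalent to d/dt g = -2 Ric(g):
  phi_t = phi (a_ss/a + b_ss/b + c_ss/c),
  a_t = a_ss + a_s (b_s/b + c_s/c) - 2 (a^4 - (b^2-c^2)^2)/(a b^2 c^2), cyclically.\<close>
definition warped_RF :: "real \<Rightarrow> (real \<Rightarrow> real \<Rightarrow> real) \<Rightarrow> (real \<Rightarrow> real \<Rightarrow> real)
    \<Rightarrow> (real \<Rightarrow> real \<Rightarrow> real) \<Rightarrow> (real \<Rightarrow> real \<Rightarrow> real) \<Rightarrow> bool" where
  "warped_RF T \<phi> a b c \<longleftrightarrow>
     smooth_zt T \<phi> \<and> smooth_zt T a \<and> smooth_zt T b \<and> smooth_zt T c \<and>
     (\<forall>z t. \<phi> (z + 2*pi) t = \<phi> z t \<and> a (z + 2*pi) t = a z t \<and>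
            b (z + 2*pi) t = b z t \<and> c (z + 2*pi) t = c z t) \<and>
     (\<forall>z. \<forall>t\<in>{0..<T}. 0 < \<phi> z t \<and> 0 < a z t \<and> 0 < b z t \<and> 0 < c z t \<and>
        ((\<lambda>\<tau>. \<phi> z \<tau>) has_real_derivative
            \<phi> z t * (pss \<phi> a z t / a z t + pss \<phi> b z t / b z t + pss \<phi> c z t / c z t))
          (at t within {0..<T}) \<and>
        ((\<lambda>\<tau>. a z \<tau>) has_real_derivative
            pss \<phi> a z t + ps \<phi> a z t * (ps \<phi> b z t / b z t + ps \<phi> c z t / c z t)
            - 2 * (a z t ^ 4 - (b z t ^ 2 - c z t ^ 2) ^ 2) / (a z t * b z t ^ 2 * c z t ^ 2))
          (at t within {0..<T}) \<and>
        ((\<lambda>\<tau>. b z \<tau>) has_real_derivative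
            pss \<phi> b z t + ps \<phi> b z t * (ps \<phi> a z t / a z t + ps \<phi> c z t / c z t)
            - 2 * (b z t ^ 4 - (a z t ^ 2 - c z t ^ 2) ^ 2) / (a z t ^ 2 * b z t * c z t ^ 2))
          (at t within {0..<T}) \<and>
        ((\<lambda>\<tau>. c z \<tau>) has_real_derivative
            pss \<phi> c z t + ps \<phi> c z t * (ps \<phi> a z t / a z t + ps \<phi> b z t / b z t)
            - 2 * (c z t ^ 4 - (a z t ^ 2 - b z t ^ 2) ^ 2) / (a z t ^ 2 * b z t ^ 2 * c z t))
          (at t within {0..<T}))"

end

theory Submission
  imports Defs
begin

text \<open>Everything follows from the maximum principle on the cylinder, applied to quantities
  built from the coefficients. At a spatial maximum of \<open>a/b > 1\<close> the second order and
  gradient terms of the flow do not increase the ratio and the reaction terms change it at a rate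
  at most linear in \<open>a/b - 1\<close>, so the ordering \<open>a \<le> b \<le> c\<close> is preserved. At a spatial
  maximum of \<open>c\<close> the reaction term gives \<open>(c\<^sup>2)\<^sub>t \<le> -4\<close>, hence
  \<open>c\<^sup>2 + 4t \<le> C = (max c(\<cdot>,0))\<^sup>2\<close>. At a spatial maximum of \<open>r = c/a\<close> one gets
  \<open>r r\<^sub>t \<le> -4 (r\<^sup>2 - 1) / c\<^sup>2 \<le> -4 (r\<^sup>2 - 1) / (C - 4t)\<close>, so \<open>(r\<^sup>2 - 1) / (C - 4t)\<^sup>2\<close>
  cannot exceed its initial bound \<open>(L\<^sup>2 - 1) / C\<^sup>2\<close>. The factor \<open>exp (L\<^sup>2 - 1) \<ge> 1\<close> of the
  statement only weakens this.\<close>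

section \<open>Periodic functions on the cylinder\<close>

lemma periodic_add_of_int_mult:
  assumes "\<And>z. f (z + p) = f (z :: real)"
  shows "f (z + of_int k * p) = f z"
proof (induction k arbitrary: z rule: int_induct[where k = 0])
  case base
  then show ?case by simp
next
  case (step1 i)
  have "f (z + of_int (i + 1) * p) = f ((z + of_int i * p) + p)" by (simp add: algebra_simps)
  then show ?case using assms step1 by simp
next
  case (step2 i)
  have "f (z + of_int (i - 1) * p) = f ((z - p) + of_int i * p)" by (simp add: algebra_simps)
  then show ?case using assms[of "z - p"] step2 by simp
qed

lemma periodic_representative:
  assumes "\<And>z. f (z + 2 * pi) = f (z :: real)"
  obtains z' where "z' \<in> {0..2 * pi}" "f z = f z'"
proof
  define k where "k = \<lfloor>z / (2 * pi)\<rfloor>"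
  show "f z = f (z + of_int (- k) * (2 * pi))"
    using periodic_add_of_int_mult[where f = f and k = "- k", OF assms] by simp
  have "of_int k \<le> z / (2 * pi)" "z / (2 * pi) < of_int k + 1"
    unfolding k_def by linarith+
  then show "z + of_int (- k) * (2 * pi) \<in> {0..2 * pi}"
    by (auto simp: field_simps)
qed

lemma periodic_attains_max:
  fixes f :: "real \<Rightarrow> real"
  assumes "continuous_on {0..2 * pi} f" and "\<And>z. f (z + 2 * pi) = f z"
  obtains zm where "\<And>y. f y \<le> f zm"
proof -
  obtain zm where zm: "\<And>y. y \<in> {0..2 * pi} \<Longrightarrow> f y \<le> f zm"
    using continuous_attains_sup[OF compact_Icc _ assms(1)] pi_ge_zero by fastforce
  show thesis
  proof
    fix y
    obtain y' where "y' \<in> {0..2 * pi}" "f y = f y'"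
      using periodic_representative[of f, OF assms(2)] .
    then show "f y \<le> f zm" using zm by simp
  qed
qed

lemma continuous_on_slice:
  assumes "continuous_on (UNIV \<times> {0..<T}) (\<lambda>p. w (fst p) (snd p))" and "s \<in> {0..<T}"
  shows "continuous_on S (\<lambda>y. w y s)"
  by (rule continuous_on_compose2[OF assms(1), of S "\<lambda>y. (y, s)", simplified])
    (use assms(2) in \<open>auto intro: continuous_intros\<close>)

lemma periodic_bdd_above:
  fixes f :: "real \<Rightarrow> real"
  assumes "continuous_on UNIV f" and "\<And>z. f (z + 2 * pi) = f z"
  shows "bdd_above (range f)"
proof -
  obtain zm where "\<And>y. f y \<le> f zm"
    using periodic_attains_max[OF continuous_on_subset[OF assms(1)]] assms(2) by blast
  then show ?thesis by (intro bdd_aboveI) auto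
qed

lemma periodic_strip_lower_bound:
  fixes f :: "real \<Rightarrow> real \<Rightarrow> real"
  assumes cont: "continuous_on (UNIV \<times> {0..<T}) (\<lambda>p. f (fst p) (snd p))"
    and per: "\<And>z t. f (z + 2 * pi) t = f z t"
    and pos: "\<And>z t. t \<in> {0..<T} \<Longrightarrow> 0 < f z t"
    and T': "0 \<le> T'" "T' < T"
  obtains \<alpha> where "0 < \<alpha>" "\<And>z t. t \<in> {0..T'} \<Longrightarrow> \<alpha> \<le> f z t"
proof -
  define K where "K = {0..2 * pi} \<times> {0..T'}"
  have KS: "K \<subseteq> UNIV \<times> {0..<T}" using T' by (auto simp: K_def)
  have "compact K" and "K \<noteq> {}" using T' by (auto simp: K_def intro!: compact_Times)
  then obtain pn where pn: "pn \<in> K" "\<And>q. q \<in> K \<Longrightarrow> f (fst pn) (snd pn) \<le> f (fst q) (snd q)"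
    using continuous_attains_inf[OF _ _ continuous_on_subset[OF cont KS]] by blast
  show thesis
  proof
    show "0 < f (fst pn) (snd pn)" using pn(1) KS pos by (cases pn) auto
    fix z t assume t: "t \<in> {0..T'}"
    obtain z' where z': "z' \<in> {0..2 * pi}" "f z t = f z' t"
      using periodic_representative[of "\<lambda>y. f y t"] per by metis
    then have "(z', t) \<in> K" using t by (auto simp: K_def)
    then show "f (fst pn) (snd pn) \<le> f z t" using pn(2) z' by force
  qed
qed

section \<open>A maximum principle\<close>

lemma periodic_first_time_reaching:
  fixes w :: "real \<Rightarrow> real \<Rightarrow> real"
  assumes cont: "continuous_on (UNIV \<times> {0..<T}) (\<lambda>p. w (fst p) (snd p))"
    and per: "\<And>z t. w (z + 2 * pi) t = w z t"
    and t: "t \<in> {0..<T}" and reach: "\<eta> \<le> w z t"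
  obtains ts zm where "ts \<in> {0..t}" "\<eta> \<le> w zm ts" "\<And>y. w y ts \<le> w zm ts"
    "\<And>s y. s \<in> {0..<ts} \<Longrightarrow> w y s < \<eta>"
proof -
  define K where "K = {0..2 * pi} \<times> {0..t}"
  define A where "A = K \<inter> (\<lambda>p. w (fst p) (snd p)) -` {\<eta>..}"
  have cK: "continuous_on K (\<lambda>p. w (fst p) (snd p))"
    by (rule continuous_on_subset[OF cont]) (use t in \<open>auto simp: K_def\<close>)
  have "closed A"
    unfolding A_def by (rule continuous_closed_preimage[OF cK]) (auto simp: K_def closed_Times)
  moreover have "compact K" unfolding K_def by (intro compact_Times compact_Icc)
  ultimately have "compact (K \<inter> A)" by (intro compact_Int_closed)
  moreover have "K \<inter> A = A" unfolding A_def by blast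
  ultimately have cA: "compact A" by simp
  obtain z' where z': "z' \<in> {0..2 * pi}" "w z t = w z' t"
    using periodic_representative[of "\<lambda>y. w y t"] per by metis
  then have "(z', t) \<in> A" using t reach by (simp add: A_def K_def)
  then have "A \<noteq> {}" by blast
  then obtain p where p: "p \<in> A" "\<And>q. q \<in> A \<Longrightarrow> snd p \<le> snd q"
    using continuous_attains_inf[OF cA _ continuous_on_snd[OF continuous_on_id]] by auto
  obtain zs ts where p_eq: "p = (zs, ts)" by (cases p)
  then have ts_range: "ts \<in> {0..t}" and "\<eta> \<le> w zs ts"
    using p(1) by (simp_all add: A_def K_def)
  have "continuous_on {0..2 * pi} (\<lambda>y. w y ts)"
    using continuous_on_slice[OF cont] ts_range t by simp
  then obtain zm where zm: "\<And>y. w y ts \<le> w zm ts"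
    using periodic_attains_max[of "\<lambda>y. w y ts"] per by metis
  show thesis
  proof
    show "ts \<in> {0..t}" by (rule ts_range)
    show "\<eta> \<le> w zm ts" using \<open>\<eta> \<le> w zs ts\<close> zm[of zs] by linarith
    show "w y ts \<le> w zm ts" for y by (rule zm)
    show "w y s < \<eta>" if s: "s \<in> {0..<ts}" for s y
    proof (rule ccontr)
      obtain y' where y': "y' \<in> {0..2 * pi}" "w y s = w y' s"
        using periodic_representative[of "\<lambda>v. w v s"] per by metis
      assume "\<not> w y s < \<eta>"
      then have "(y', s) \<in> A" using y' s ts_range by (simp add: A_def K_def)
      then show False using p(2)[of "(y', s)"] s p_eq by simp
    qed
  qed
qed

lemma max_principle_strict:
  fixes w wt :: "real \<Rightarrow> real \<Rightarrow> real"
  assumes cont: "continuous_on (UNIV \<times> {0..<T}) (\<lambda>p. w (fst p) (snd p))"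
    and per: "\<And>z t. w (z + 2 * pi) t = w z t"
    and deriv: "\<And>z t. t \<in> {0..<T} \<Longrightarrow>
      ((\<lambda>\<tau>. w z \<tau>) has_real_derivative wt z t) (at t within {0..<T})"
    and init: "\<And>z. w z 0 \<le> 0"
    and at_max: "\<And>z t. t \<in> {0<..<T} \<Longrightarrow> (\<forall>y. w y t \<le> w z t) \<Longrightarrow> 0 < w z t \<Longrightarrow> wt z t < 0"
    and t: "t \<in> {0..<T}"
  shows "w z t \<le> 0"
proof (rule ccontr)
  assume "\<not> w z t \<le> 0"
  then have pos: "0 < w z t" by simp
  obtain ts zm where ts: "ts \<in> {0..t}" and reach: "w z t \<le> w zm ts"
    and zm: "\<And>y. w y ts \<le> w zm ts" and before: "\<And>s y. s \<in> {0..<ts} \<Longrightarrow> w y s < w z t"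
    using periodic_first_time_reaching[OF cont per t order.refl] by metis
  have "ts \<noteq> 0" using init[of zm] reach pos by auto
  then have ts_open: "ts \<in> {0<..<T}" using ts t by auto
  then have "wt zm ts < 0" using at_max[of ts zm] zm reach pos by auto
  moreover have "((\<lambda>\<tau>. w zm \<tau>) has_real_derivative wt zm ts) (at ts)"
  proof -
    have "((\<lambda>\<tau>. w zm \<tau>) has_real_derivative wt zm ts) (at ts within {0<..<T})"
      by (rule DERIV_subset[OF deriv]) (use ts_open in auto)
    then show ?thesis using at_within_open[of ts "{0<..<T}"] ts_open by auto
  qed
  ultimately obtain d where d: "0 < d" "\<And>h. 0 < h \<Longrightarrow> h < d \<Longrightarrow> w zm ts < w zm (ts - h)"
    using DERIV_neg_dec_left by metis
  define h where "h = min d ts / 2"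
  have h: "0 < h" "h < d" "h < ts" using d ts_open by (auto simp: h_def)
  then have "w z t < w zm (ts - h)" using d(2) reach by fastforce
  moreover have "ts - h \<in> {0..<ts}" using h by simp
  then have "w zm (ts - h) < w z t" by (rule before)
  ultimately show False by simp
qed

text \<open>The substitution \<open>exp (- K t) (u - M) - \<epsilon> (1 + t)\<close> reduces the linear growth
  condition to the strict case.\<close>

lemma max_principle:
  fixes u ut :: "real \<Rightarrow> real \<Rightarrow> real"
  assumes cont: "continuous_on (UNIV \<times> {0..<T}) (\<lambda>p. u (fst p) (snd p))"
    and per: "\<And>z t. u (z + 2 * pi) t = u z t"
    and deriv: "\<And>z t. t \<in> {0..<T} \<Longrightarrow>
      ((\<lambda>\<tau>. u z \<tau>) has_real_derivative ut z t) (at t within {0..<T})"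
    and init: "\<And>z. u z 0 \<le> M"
    and at_max: "\<And>z t. t \<in> {0<..<T} \<Longrightarrow> (\<forall>y. u y t \<le> u z t) \<Longrightarrow> M < u z t \<Longrightarrow>
      ut z t \<le> K * (u z t - M)"
    and t: "t \<in> {0..<T}"
  shows "u z t \<le> M"
proof -
  have perturbed: "exp (- K * t) * (u z t - M) \<le> \<epsilon> * (1 + t)" if "0 < \<epsilon>" for \<epsilon>
  proof -
    define w where "w = (\<lambda>z t. exp (- K * t) * (u z t - M) - \<epsilon> * (1 + t))"
    define wt where "wt = (\<lambda>z t. exp (- K * t) * (ut z t - K * (u z t - M)) - \<epsilon>)"
    have "w z t \<le> 0"
    proof (rule max_principle_strict[of T w wt])
      show "continuous_on (UNIV \<times> {0..<T}) (\<lambda>p. w (fst p) (snd p))"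
        unfolding w_def by (intro continuous_intros cont)
      show "((\<lambda>\<tau>. w z \<tau>) has_real_derivative wt z t) (at t within {0..<T})"
        if "t \<in> {0..<T}" for z t
        unfolding w_def wt_def
        by (rule derivative_eq_intros deriv[OF that] refl | simp)+ (simp add: algebra_simps)
      show "w z 0 \<le> 0" for z using init[of z] \<open>0 < \<epsilon>\<close> by (simp add: w_def)
      show "wt z t < 0" if t: "t \<in> {0<..<T}" and max: "\<forall>y. w y t \<le> w z t" and "0 < w z t" for z t
      proof -
        have "0 < \<epsilon> * (1 + t)" using \<open>0 < \<epsilon>\<close> t by simp
        then have "0 < exp (- K * t) * (u z t - M)"
          using \<open>0 < w z t\<close> unfolding w_def by linarith
        then have "M < u z t" by (simp add: zero_less_mult_iff)
        moreover have "\<forall>y. u y t \<le> u z t" using max by (simp add: w_def)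
        ultimately have "ut z t - K * (u z t - M) \<le> 0" using at_max[OF t] by simp
        then have "exp (- K * t) * (ut z t - K * (u z t - M)) \<le> 0"
          by (simp add: mult_nonneg_nonpos)
        then show ?thesis using \<open>0 < \<epsilon>\<close> by (simp add: wt_def)
      qed
    qed (use per t in \<open>simp_all add: w_def\<close>)
    then show ?thesis by (simp add: w_def)
  qed
  have "exp (- K * t) * (u z t - M) \<le> 0 + e" if "0 < e" for e
    using perturbed[of "e / (1 + t)"] that t by simp
  then have "exp (- K * t) * (u z t - M) \<le> 0" by (rule field_le_epsilon)
  then show ?thesis by (simp add: mult_le_0_iff)
qed

lemma DERIV_sq_excess_div_sq:
  fixes r :: "real \<Rightarrow> real"
  assumes dr: "(r has_real_derivative R) (at t within S)" and D: "C - 4 * t \<noteq> 0"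
  shows "((\<lambda>\<tau>. ((r \<tau>)\<^sup>2 - 1) / (C - 4 * \<tau>)\<^sup>2) has_real_derivative
    (2 * r t * R * (C - 4 * t)\<^sup>2 + 8 * ((r t)\<^sup>2 - 1) * (C - 4 * t)) / ((C - 4 * t)\<^sup>2)\<^sup>2) (at t within S)"
proof -
  have num: "((\<lambda>\<tau>. (r \<tau>)\<^sup>2 - 1) has_real_derivative 2 * r t * R) (at t within S)"
    using DERIV_diff[OF DERIV_power[OF dr, of 2] DERIV_const[of 1]] by (rule DERIV_cong) simp
  have den: "((\<lambda>\<tau>. (C - 4 * \<tau>)\<^sup>2) has_real_derivative - 8 * (C - 4 * t)) (at t within S)"
    by (auto intro!: derivative_eq_intros)
  from D have "(C - 4 * t)\<^sup>2 \<noteq> 0" by simp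
  from DERIV_divide[OF num den this] show ?thesis
    by (rule DERIV_cong) (simp add: algebra_simps power2_eq_square)
qed

text \<open>Comparison with the ODE \<open>r r' = -4 (r\<^sup>2 - 1) / (C - 4t)\<close>: at a spatial maximum of \<open>r\<close>
  the quotient \<open>(r\<^sup>2 - 1) / (C - 4t)\<^sup>2\<close> has non-positive time derivative.\<close>

lemma max_principle_sq_excess_decay:
  fixes r R :: "real \<Rightarrow> real \<Rightarrow> real"
  assumes cont: "continuous_on (UNIV \<times> {0..<T}) (\<lambda>p. r (fst p) (snd p))"
    and per: "\<And>z t. r (z + 2 * pi) t = r z t"
    and pos: "\<And>z t. t \<in> {0..<T} \<Longrightarrow> 0 < r z t"
    and deriv: "\<And>z t. t \<in> {0..<T} \<Longrightarrow>
      ((\<lambda>\<tau>. r z \<tau>) has_real_derivative R z t) (at t within {0..<T})"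
    and D: "\<And>t. t \<in> {0..<T} \<Longrightarrow> 0 < C - 4 * t"
    and init: "\<And>z. r z 0 \<le> L"
    and at_max: "\<And>z t. t \<in> {0<..<T} \<Longrightarrow> \<forall>y. r y t \<le> r z t \<Longrightarrow>
      r z t * R z t \<le> -4 * ((r z t)\<^sup>2 - 1) / (C - 4 * t)"
    and t: "t \<in> {0..<T}"
  shows "(r z t)\<^sup>2 - 1 \<le> (L\<^sup>2 - 1) * (1 - 4 * t / C)\<^sup>2"
proof -
  have "((r z t)\<^sup>2 - 1) / (C - 4 * t)\<^sup>2 \<le> (L\<^sup>2 - 1) / C\<^sup>2"
  proof (rule max_principle[where u = "\<lambda>z t. ((r z t)\<^sup>2 - 1) / (C - 4 * t)\<^sup>2" and K = 0
        and ut = "\<lambda>z t. (2 * r z t * R z t * (C - 4 * t)\<^sup>2 + 8 * ((r z t)\<^sup>2 - 1) * (C - 4 * t))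
          / ((C - 4 * t)\<^sup>2)\<^sup>2"])
    show "continuous_on (UNIV \<times> {0..<T}) (\<lambda>p. ((r (fst p) (snd p))\<^sup>2 - 1) / (C - 4 * snd p)\<^sup>2)"
      using D by (intro continuous_intros cont) fastforce
    show "((\<lambda>\<tau>. ((r z \<tau>)\<^sup>2 - 1) / (C - 4 * \<tau>)\<^sup>2) has_real_derivative
        (2 * r z t * R z t * (C - 4 * t)\<^sup>2 + 8 * ((r z t)\<^sup>2 - 1) * (C - 4 * t)) / ((C - 4 * t)\<^sup>2)\<^sup>2)
        (at t within {0..<T})" if "t \<in> {0..<T}" for z t
      by (rule DERIV_sq_excess_div_sq[OF deriv[OF that]]) (use D[OF that] in simp)
    show "((r z 0)\<^sup>2 - 1) / (C - 4 * 0)\<^sup>2 \<le> (L\<^sup>2 - 1) / C\<^sup>2" for z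
      using pos[of 0 z] init[of z] t by (auto intro!: divide_right_mono power_mono)
    show "(2 * r z t * R z t * (C - 4 * t)\<^sup>2 + 8 * ((r z t)\<^sup>2 - 1) * (C - 4 * t)) / ((C - 4 * t)\<^sup>2)\<^sup>2
        \<le> 0 * (((r z t)\<^sup>2 - 1) / (C - 4 * t)\<^sup>2 - (L\<^sup>2 - 1) / C\<^sup>2)"
      if tt: "t \<in> {0<..<T}" and max: "\<forall>y. ((r y t)\<^sup>2 - 1) / (C - 4 * t)\<^sup>2 \<le> ((r z t)\<^sup>2 - 1) / (C - 4 * t)\<^sup>2"
      for z t
    proof -
      have tT: "t \<in> {0..<T}" using tt by auto
      have "r y t \<le> r z t" for y
      proof (rule power2_le_imp_le)
        show "(r y t)\<^sup>2 \<le> (r z t)\<^sup>2" using spec[OF max, of y] D[OF tT] by (simp add: divide_le_cancel)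
      qed (use pos[OF tT, of z] in simp)
      then have "2 * (r z t * R z t) * (C - 4 * t)\<^sup>2 \<le> 2 * (-4 * ((r z t)\<^sup>2 - 1) / (C - 4 * t)) * (C - 4 * t)\<^sup>2"
        using at_max[OF tt] by (intro mult_right_mono mult_left_mono) auto
      also have "\<dots> = - 8 * ((r z t)\<^sup>2 - 1) * (C - 4 * t)"
        using D[OF tT] by (simp add: power2_eq_square)
      finally have "2 * r z t * R z t * (C - 4 * t)\<^sup>2 + 8 * ((r z t)\<^sup>2 - 1) * (C - 4 * t) \<le> 0"
        by (simp add: algebra_simps)
      then show ?thesis by (simp add: divide_le_0_iff)
    qed
  qed (use per t in auto)
  then have "(r z t)\<^sup>2 - 1 \<le> (L\<^sup>2 - 1) / C\<^sup>2 * (C - 4 * t)\<^sup>2"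
    using D[OF t] by (simp add: divide_le_eq)
  also have "\<dots> = (L\<^sup>2 - 1) * (1 - 4 * t / C)\<^sup>2"
    using D[of 0] t by (simp add: field_simps power2_eq_square)
  finally show ?thesis .
qed

section \<open>Spatial derivatives at a maximum\<close>

lemma smooth_zt_continuous:
  assumes "smooth_zt T f"
  shows "continuous_on (UNIV \<times> {0..<T}) (\<lambda>p. f (fst p) (snd p))"
  using assms unfolding smooth_zt_def by metis

lemma smooth_zt_z_derivs:
  assumes "smooth_zt T f"
  obtains f1 f2 where
    "\<And>z t. t \<in> {0..<T} \<Longrightarrow> ((\<lambda>y. f y t) has_real_derivative f1 z t) (at z)"
    "\<And>z t. t \<in> {0..<T} \<Longrightarrow> ((\<lambda>y. f1 y t) has_real_derivative f2 z t) (at z)"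
proof -
  obtain D :: "nat \<Rightarrow> nat \<Rightarrow> real \<Rightarrow> real \<Rightarrow> real" where "D 0 0 = f" and
    "\<And>i j z t. t \<in> {0..<T} \<Longrightarrow> ((\<lambda>y. D i j y t) has_real_derivative D (Suc i) j z t) (at z)"
    using assms unfolding smooth_zt_def by metis
  then show thesis using that[of "D 1 0" "D 2 0"] by (metis One_nat_def Suc_1)
qed

lemma smooth_zt_arclength_derivs:
  assumes "smooth_zt T \<phi>" "smooth_zt T f" "t \<in> {0..<T}" "\<And>y. 0 < \<phi> y t"
  shows "((\<lambda>y. f y t) has_real_derivative \<phi> z t * ps \<phi> f z t) (at z)"
    and "((\<lambda>y. ps \<phi> f y t) has_real_derivative \<phi> z t * pss \<phi> f z t) (at z)"
proof -
  obtain p1 where dp: "\<And>y. ((\<lambda>y. \<phi> y t) has_real_derivative p1 y t) (at y)"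
    using smooth_zt_z_derivs[OF assms(1)] assms(3) by metis
  obtain f1 f2 where df: "\<And>y. ((\<lambda>y. f y t) has_real_derivative f1 y t) (at y)"
    and df1: "\<And>y. ((\<lambda>y. f1 y t) has_real_derivative f2 y t) (at y)"
    using smooth_zt_z_derivs[OF assms(2)] assms(3) by metis
  have ps_eq: "ps \<phi> f y t = f1 y t / \<phi> y t" for y
    unfolding ps_def pz_def using DERIV_imp_deriv[OF df] by simp
  then show "((\<lambda>y. f y t) has_real_derivative \<phi> z t * ps \<phi> f z t) (at z)"
    using df[of z] assms(4)[of z] by simp
  have "((\<lambda>y. ps \<phi> f y t) has_real_derivative
      (f2 z t * \<phi> z t - f1 z t * p1 z t) / (\<phi> z t * \<phi> z t)) (at z)"
    unfolding ps_eq by (rule DERIV_divide[OF df1 dp]) (use assms(4)[of z] in simp)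
  moreover from this have "pss \<phi> f z t = (f2 z t * \<phi> z t - f1 z t * p1 z t) / (\<phi> z t * \<phi> z t) / \<phi> z t"
    unfolding pss_def ps_def[of \<phi> "ps \<phi> f"] pz_def by (simp add: DERIV_imp_deriv)
  ultimately show "((\<lambda>y. ps \<phi> f y t) has_real_derivative \<phi> z t * pss \<phi> f z t) (at z)"
    using assms(4)[of z] by simp
qed

text \<open>At a maximum of \<open>g\<close> with \<open>g' = h k\<close> and \<open>h > 0\<close>: if \<open>k'(z) > 0\<close> then \<open>k\<close>, hence \<open>g'\<close>,
  would be positive just to the right of \<open>z\<close>. No derivative of \<open>h\<close> is needed.\<close>

lemma weighted_second_derivative_test:
  fixes g h k :: "real \<Rightarrow> real"
  assumes dg: "\<And>v. (g has_real_derivative h v * k v) (at v)"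
    and h: "\<And>v. 0 < h v"
    and dk: "(k has_real_derivative k') (at z)"
    and max: "\<And>y. g y \<le> g z"
  shows "k z = 0" and "k' \<le> 0"
proof -
  have "h z * k z = 0" by (rule DERIV_local_max[OF dg zero_less_one]) (use max in auto)
  then show "k z = 0" using h[of z] by simp
  show "k' \<le> 0"
  proof (rule ccontr)
    assume "\<not> k' \<le> 0"
    then obtain d where d: "0 < d" "\<And>e. 0 < e \<Longrightarrow> e < d \<Longrightarrow> k z < k (z + e)"
      using DERIV_pos_inc_right[OF dk] by force
    obtain v where v: "z < v" "v < z + d / 2" "g (z + d / 2) - g z = (z + d / 2 - z) * (h v * k v)"
      using MVT2[of z "z + d / 2" g "\<lambda>v. h v * k v"] dg d by auto
    have "0 < k v" using d(2)[of "v - z"] v \<open>k z = 0\<close> by auto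
    then have "0 < d / 2 * (h v * k v)" using d h[of v] by simp
    then have "g z < g (z + d / 2)" using v by simp
    with max show False by (meson not_le)
  qed
qed

text \<open>The hypotheses express \<open>d/dz = \<phi> d/ds\<close>: \<open>xs\<close>, \<open>xss\<close> are the first and second arclength
  derivatives of \<open>x\<close>.\<close>

lemma ratio_max_arclength:
  fixes x xs xss y ys yss \<phi> :: "real \<Rightarrow> real"
  assumes \<phi>: "\<And>v. 0 < \<phi> v" and y: "\<And>v. 0 < y v"
    and dx: "\<And>v. (x has_real_derivative \<phi> v * xs v) (at v)"
    and dxs: "\<And>v. (xs has_real_derivative \<phi> v * xss v) (at v)"
    and dy: "\<And>v. (y has_real_derivative \<phi> v * ys v) (at v)"
    and dys: "\<And>v. (ys has_real_derivative \<phi> v * yss v) (at v)"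
    and max: "\<And>v. x v / y v \<le> x z / y z"
  shows "xs z * y z = x z * ys z" and "xss z * y z - x z * yss z \<le> 0"
proof -
  define q where "q v = (xs v * y v - x v * ys v) / (y v)\<^sup>2" for v
  have dq_ratio: "((\<lambda>v. x v / y v) has_real_derivative \<phi> v * q v) (at v)" for v
    using DERIV_divide[OF dx dy, of v] y[of v]
    by (auto simp: q_def power2_eq_square algebra_simps elim!: DERIV_cong)
  have dN: "((\<lambda>v. xs v * y v - x v * ys v) has_real_derivative \<phi> z * (xss z * y z - x z * yss z)) (at z)"
    using DERIV_diff[OF DERIV_mult[OF dxs dy] DERIV_mult[OF dx dys]]
    by (rule DERIV_cong) (simp add: algebra_simps)
  have dD: "((\<lambda>v. (y v)\<^sup>2) has_real_derivative 2 * y z * (\<phi> z * ys z)) (at z)"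
    using DERIV_power[OF dy, of 2] by (rule DERIV_cong) simp
  define q' where "q' = (\<phi> z * (xss z * y z - x z * yss z) * (y z)\<^sup>2
      - (xs z * y z - x z * ys z) * (2 * y z * (\<phi> z * ys z))) / ((y z)\<^sup>2 * (y z)\<^sup>2)"
  have "(q has_real_derivative q') (at z)"
    unfolding q_def[abs_def] q'_def by (rule DERIV_divide[OF dN dD]) (use y[of z] in simp)
  note test = weighted_second_derivative_test[OF dq_ratio \<phi> this max]
  then show crit: "xs z * y z = x z * ys z" using y[of z] by (simp add: q_def)
  have "q' = \<phi> z * (xss z * y z - x z * yss z) / (y z)\<^sup>2"
    using y[of z] by (simp add: q'_def crit power2_eq_square)
  then show "xss z * y z - x z * yss z \<le> 0"
    using test(2) \<phi>[of z] y[of z] by (simp add: divide_le_0_iff mult_le_0_iff)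
qed

section \<open>The warped Ricci flow equations\<close>

text \<open>The right-hand side of the evolution equation of a coefficient \<open>x\<close> of the metric, in terms of
  its arclength derivatives and the other two coefficients \<open>y\<close>, \<open>w\<close>.\<close>

definition warped_speed :: "real \<Rightarrow> real \<Rightarrow> real \<Rightarrow> real \<Rightarrow> real \<Rightarrow> real \<Rightarrow> real \<Rightarrow> real" where
  "warped_speed x xs xss y ys w ws =
     xss + xs * (ys / y + ws / w) - 2 * (x ^ 4 - (y ^ 2 - w ^ 2) ^ 2) / (x * y ^ 2 * w ^ 2)"

lemma warped_speed_swap: "warped_speed x xs xss y ys w ws = warped_speed x xs xss w ws y ys"
  unfolding warped_speed_def by (simp add: ac_simps power2_commute)

lemma warped_RF_cycle:
  assumes "warped_RF T \<phi> a b c"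
  shows "warped_RF T \<phi> b c a"
  using assms unfolding warped_RF_def by (simp add: ac_simps power2_commute)

lemma warped_RF_continuous:
  "warped_RF T \<phi> a b c \<Longrightarrow> continuous_on (UNIV \<times> {0..<T}) (\<lambda>p. a (fst p) (snd p))"
  unfolding warped_RF_def by (blast intro: smooth_zt_continuous)

lemma warped_RF_periodic: "warped_RF T \<phi> a b c \<Longrightarrow> a (z + 2 * pi) t = a z t"
  unfolding warped_RF_def by blast

lemma warped_RF_pos:
  "warped_RF T \<phi> a b c \<Longrightarrow> t \<in> {0..<T} \<Longrightarrow> 0 < \<phi> z t \<and> 0 < a z t \<and> 0 < b z t \<and> 0 < c z t"
  unfolding warped_RF_def by blast

lemma warped_RF_arclength_derivs:
  assumes "warped_RF T \<phi> a b c" "t \<in> {0..<T}"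
  shows "((\<lambda>y. a y t) has_real_derivative \<phi> z t * ps \<phi> a z t) (at z)"
    and "((\<lambda>y. ps \<phi> a y t) has_real_derivative \<phi> z t * pss \<phi> a z t) (at z)"
  using smooth_zt_arclength_derivs[of T \<phi> a t] warped_RF_pos[OF assms] assms
  unfolding warped_RF_def by blast+

lemma warped_RF_time_deriv:
  assumes "warped_RF T \<phi> a b c" "t \<in> {0..<T}"
  shows "((\<lambda>\<tau>. a z \<tau>) has_real_derivative
      warped_speed (a z t) (ps \<phi> a z t) (pss \<phi> a z t) (b z t) (ps \<phi> b z t) (c z t) (ps \<phi> c z t))
      (at t within {0..<T})"
  using assms unfolding warped_RF_def warped_speed_def by blast

text \<open>At a critical point of \<open>x/y\<close> the gradient terms cancel; only the second order terms
  (with a sign) and the reaction terms remain.\<close>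

lemma warped_speed_ratio_at_critical:
  fixes x xs xss y ys yss w ws :: real
  assumes pos: "0 < x" "0 < y" "0 < w"
    and crit: "xs * y = x * ys" and crit2: "xss * y - x * yss \<le> 0"
  shows "y * warped_speed x xs xss y ys w ws - x * warped_speed y ys yss x xs w ws
    \<le> -4 * (x\<^sup>2 - y\<^sup>2) * (x\<^sup>2 + y\<^sup>2 - w\<^sup>2) / (x * y * w\<^sup>2)"
proof -
  have gradient: "y * (xs * (ys / y + ws / w)) - x * (ys * (xs / x + ws / w)) = ws / w * (xs * y - x * ys)"
    using pos by (simp add: field_simps)
  have "y * (2 * (x ^ 4 - (y\<^sup>2 - w\<^sup>2)\<^sup>2) / (x * y\<^sup>2 * w\<^sup>2)) - x * (2 * (y ^ 4 - (x\<^sup>2 - w\<^sup>2)\<^sup>2) / (y * x\<^sup>2 * w\<^sup>2))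
      = 2 * ((x ^ 4 - (y\<^sup>2 - w\<^sup>2)\<^sup>2) - (y ^ 4 - (x\<^sup>2 - w\<^sup>2)\<^sup>2)) / (x * y * w\<^sup>2)"
    using pos by (simp add: field_simps power2_eq_square)
  also have "(x ^ 4 - (y\<^sup>2 - w\<^sup>2)\<^sup>2) - (y ^ 4 - (x\<^sup>2 - w\<^sup>2)\<^sup>2) = 2 * (x\<^sup>2 - y\<^sup>2) * (x\<^sup>2 + y\<^sup>2 - w\<^sup>2)"
    by algebra
  finally have reaction: "y * (2 * (x ^ 4 - (y\<^sup>2 - w\<^sup>2)\<^sup>2) / (x * y\<^sup>2 * w\<^sup>2))
      - x * (2 * (y ^ 4 - (x\<^sup>2 - w\<^sup>2)\<^sup>2) / (y * x\<^sup>2 * w\<^sup>2))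
      = 4 * (x\<^sup>2 - y\<^sup>2) * (x\<^sup>2 + y\<^sup>2 - w\<^sup>2) / (x * y * w\<^sup>2)"
    by simp
  have "y * warped_speed x xs xss y ys w ws - x * warped_speed y ys yss x xs w ws
      = (xss * y - x * yss) + (y * (xs * (ys / y + ws / w)) - x * (ys * (xs / x + ws / w)))
        - (y * (2 * (x ^ 4 - (y\<^sup>2 - w\<^sup>2)\<^sup>2) / (x * y\<^sup>2 * w\<^sup>2))
           - x * (2 * (y ^ 4 - (x\<^sup>2 - w\<^sup>2)\<^sup>2) / (y * x\<^sup>2 * w\<^sup>2)))"
    unfolding warped_speed_def by (simp add: algebra_simps)
  also have "\<dots> = (xss * y - x * yss) - 4 * (x\<^sup>2 - y\<^sup>2) * (x\<^sup>2 + y\<^sup>2 - w\<^sup>2) / (x * y * w\<^sup>2)"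
    unfolding gradient reaction crit by simp
  also have "\<dots> \<le> -4 * (x\<^sup>2 - y\<^sup>2) * (x\<^sup>2 + y\<^sup>2 - w\<^sup>2) / (x * y * w\<^sup>2)"
  proof -
    have "-4 * (x\<^sup>2 - y\<^sup>2) * (x\<^sup>2 + y\<^sup>2 - w\<^sup>2) / (x * y * w\<^sup>2)
        = - (4 * (x\<^sup>2 - y\<^sup>2) * (x\<^sup>2 + y\<^sup>2 - w\<^sup>2) / (x * y * w\<^sup>2))"
      by (simp only: minus_divide_left mult_minus_left)
    then show ?thesis using crit2 by linarith
  qed
  finally show ?thesis .
qed

lemma ratio_rate_le_linear:
  fixes x y w N \<alpha> :: real
  assumes "0 < \<alpha>" "\<alpha> \<le> x" "\<alpha> \<le> y" "y < x" "0 < w"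
    and N: "N \<le> -4 * (x\<^sup>2 - y\<^sup>2) * (x\<^sup>2 + y\<^sup>2 - w\<^sup>2) / (x * y * w\<^sup>2)"
  shows "N / y\<^sup>2 \<le> 8 / \<alpha>\<^sup>2 * (x / y - 1)"
proof -
  have pos: "0 < x" "0 < y" and d: "0 < x\<^sup>2 - y\<^sup>2"
    using assms by (auto intro: power_strict_mono)
  have "-4 * (x\<^sup>2 - y\<^sup>2) * (x\<^sup>2 + y\<^sup>2 - w\<^sup>2) = 4 * (x\<^sup>2 - y\<^sup>2) * w\<^sup>2 - 4 * ((x\<^sup>2 - y\<^sup>2) * (x\<^sup>2 + y\<^sup>2))"
    by (simp add: algebra_simps)
  moreover have "0 \<le> (x\<^sup>2 - y\<^sup>2) * (x\<^sup>2 + y\<^sup>2)" using d by simp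
  ultimately have "-4 * (x\<^sup>2 - y\<^sup>2) * (x\<^sup>2 + y\<^sup>2 - w\<^sup>2) \<le> 4 * (x\<^sup>2 - y\<^sup>2) * w\<^sup>2" by linarith
  then have "N \<le> 4 * (x\<^sup>2 - y\<^sup>2) * w\<^sup>2 / (x * y * w\<^sup>2)"
    using N pos \<open>0 < w\<close> by (meson divide_right_mono order_trans mult_pos_pos zero_less_power less_imp_le)
  also have "\<dots> = 4 * (x\<^sup>2 - y\<^sup>2) / (x * y)" using \<open>0 < w\<close> by simp
  finally have "N / y\<^sup>2 \<le> 4 * (x\<^sup>2 - y\<^sup>2) / (x * y) / y\<^sup>2" by (rule divide_right_mono) simp
  also have "\<dots> = 4 * (x / y - 1) * (1 / (y * y) + 1 / (x * y))"
    using pos by (simp add: field_simps power2_eq_square)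
  also have "\<dots> \<le> 4 * (x / y - 1) * (2 / \<alpha>\<^sup>2)"
  proof -
    have "1 / (y * y) \<le> 1 / \<alpha>\<^sup>2" "1 / (x * y) \<le> 1 / \<alpha>\<^sup>2"
      using assms by (auto simp: power2_eq_square intro!: divide_left_mono mult_mono)
    moreover have "0 \<le> x / y - 1" using assms pos by simp
    ultimately show ?thesis by (intro mult_left_mono) auto
  qed
  finally show ?thesis by simp
qed

lemma square_product_le:
  fixes A B C :: real
  assumes "0 \<le> A" "0 \<le> B" "A \<le> C" "B \<le> C"
  shows "A * B \<le> C\<^sup>2 - (A - B)\<^sup>2"
proof -
  have "C\<^sup>2 - (A - B)\<^sup>2 - A * B = (C\<^sup>2 - max A B ^ 2) + min A B * (max A B - min A B)"
    by (cases "A \<le> B") (simp_all add: max_def min_def power2_eq_square algebra_simps)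
  moreover have "max A B ^ 2 \<le> C\<^sup>2" using assms by (intro power_mono) auto
  moreover have "0 \<le> min A B * (max A B - min A B)" using assms by simp
  ultimately show ?thesis by linarith
qed

lemma largest_ratio_rate_bound:
  fixes a b c D N :: real
  assumes pos: "0 < a" "0 < b" and ac: "a \<le> c" and bc: "b \<le> c" and cD: "c\<^sup>2 \<le> D"
    and N: "N \<le> -4 * (c\<^sup>2 - a\<^sup>2) * (c\<^sup>2 + a\<^sup>2 - b\<^sup>2) / (c * a * b\<^sup>2)"
  shows "c / a * (N / a\<^sup>2) \<le> -4 * ((c / a)\<^sup>2 - 1) / D"
proof -
  have c: "0 < c" using pos ac by simp
  have ca: "0 \<le> c\<^sup>2 - a\<^sup>2" and cb: "b\<^sup>2 \<le> c\<^sup>2" using pos ac bc by (auto intro: power_mono)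
  have "c / a * (N / a\<^sup>2) \<le> c / a * (-4 * (c\<^sup>2 - a\<^sup>2) * (c\<^sup>2 + a\<^sup>2 - b\<^sup>2) / (c * a * b\<^sup>2) / a\<^sup>2)"
    using N pos c by (intro mult_left_mono divide_right_mono) auto
  also have "\<dots> = -4 * ((c\<^sup>2 - a\<^sup>2) * (c\<^sup>2 + a\<^sup>2 - b\<^sup>2)) / (a ^ 4 * b\<^sup>2)"
    using pos c by (simp add: field_simps power2_eq_square power4_eq_xxxx)
  also have "\<dots> \<le> -4 * ((c\<^sup>2 - a\<^sup>2) * a\<^sup>2) / (a ^ 4 * b\<^sup>2)"
    using ca cb pos by (intro divide_right_mono mult_left_mono_neg mult_left_mono) auto
  also have "\<dots> = -4 * (c\<^sup>2 - a\<^sup>2) / (a\<^sup>2 * b\<^sup>2)"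
    using pos by (simp add: field_simps power2_eq_square power4_eq_xxxx)
  also have "\<dots> \<le> -4 * (c\<^sup>2 - a\<^sup>2) / (a\<^sup>2 * c\<^sup>2)"
    using ca cb pos c by (intro divide_left_mono_neg mult_left_mono) (auto simp: mult_nonpos_nonneg)
  also have "\<dots> = -4 * ((c / a)\<^sup>2 - 1) / c\<^sup>2"
    using pos c by (simp add: field_simps power2_eq_square)
  also have "\<dots> \<le> -4 * ((c / a)\<^sup>2 - 1) / D"
  proof -
    have "0 \<le> (c / a)\<^sup>2 - 1" using pos ac by (simp add: field_simps power_mono)
    moreover have "0 < D" using cD c by (meson order_less_le_trans zero_less_power)
    ultimately show ?thesis using cD pos c by (intro divide_left_mono_neg) (auto simp: mult_nonpos_nonneg)
  qed
  finally show ?thesis .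
qed

section \<open>Evolution of the coefficients\<close>

lemma warped_RF_ratio_time_deriv:
  assumes flow: "warped_RF T \<phi> a b c" and t: "t \<in> {0..<T}"
  shows "((\<lambda>\<tau>. a z \<tau> / b z \<tau>) has_real_derivative
    (b z t * warped_speed (a z t) (ps \<phi> a z t) (pss \<phi> a z t) (b z t) (ps \<phi> b z t) (c z t) (ps \<phi> c z t)
     - a z t * warped_speed (b z t) (ps \<phi> b z t) (pss \<phi> b z t) (a z t) (ps \<phi> a z t) (c z t) (ps \<phi> c z t))
    / (b z t)\<^sup>2) (at t within {0..<T})"
proof -
  have "b z t \<noteq> 0" using warped_RF_pos[OF flow t, of z] by simp
  from DERIV_divide[OF warped_RF_time_deriv[OF flow t] warped_RF_time_deriv[OF warped_RF_cycle[OF flow] t] this]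
  show ?thesis
    by (rule DERIV_cong) (simp add: power2_eq_square warped_speed_swap[of "b z t" _ _ "c z t"] ac_simps)
qed

lemma warped_RF_ratio_speed_at_max:
  assumes flow: "warped_RF T \<phi> a b c" and t: "t \<in> {0..<T}"
    and max: "\<And>v. a v t / b v t \<le> a z t / b z t"
  shows "b z t * warped_speed (a z t) (ps \<phi> a z t) (pss \<phi> a z t) (b z t) (ps \<phi> b z t) (c z t) (ps \<phi> c z t)
     - a z t * warped_speed (b z t) (ps \<phi> b z t) (pss \<phi> b z t) (a z t) (ps \<phi> a z t) (c z t) (ps \<phi> c z t)
    \<le> -4 * ((a z t)\<^sup>2 - (b z t)\<^sup>2) * ((a z t)\<^sup>2 + (b z t)\<^sup>2 - (c z t)\<^sup>2) / (a z t * b z t * (c z t)\<^sup>2)"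
proof (rule warped_speed_ratio_at_critical)
  note derivs = warped_RF_arclength_derivs[OF flow t] warped_RF_arclength_derivs[OF warped_RF_cycle[OF flow] t]
  show "ps \<phi> a z t * b z t = a z t * ps \<phi> b z t"
    and "pss \<phi> a z t * b z t - a z t * pss \<phi> b z t \<le> 0"
    using ratio_max_arclength[of "\<lambda>v. \<phi> v t" "\<lambda>v. b v t" "\<lambda>v. a v t" "\<lambda>v. ps \<phi> a v t"
        "\<lambda>v. pss \<phi> a v t" "\<lambda>v. ps \<phi> b v t" "\<lambda>v. pss \<phi> b v t" z] derivs warped_RF_pos[OF flow t] max
    by auto
qed (use warped_RF_pos[OF flow t] in auto)

lemma warped_RF_order_preserved:
  assumes flow: "warped_RF T \<phi> a b c" and init: "\<And>z. a z 0 \<le> b z 0" and t: "t \<in> {0..<T}"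
  shows "a z t \<le> b z t"
proof -
  note flow_b = warped_RF_cycle[OF flow]
  \<comment> \<open>A uniform positive lower bound for \<open>a\<close> and \<open>b\<close>, needed for the growth rate, exists only on
    compact time intervals.\<close>
  define T' where "T' = (t + T) / 2"
  have T': "0 \<le> T'" "T' < T" "t < T'" using t by (auto simp: T'_def)
  then have sub: "{0..<T'} \<subseteq> {0..<T}" by auto
  have pos_a: "\<And>z t. t \<in> {0..<T} \<Longrightarrow> 0 < a z t" and pos_b: "\<And>z t. t \<in> {0..<T} \<Longrightarrow> 0 < b z t"
    using warped_RF_pos[OF flow] by blast+
  obtain \<alpha>a where \<alpha>a: "0 < \<alpha>a" "\<And>z t. t \<in> {0..T'} \<Longrightarrow> \<alpha>a \<le> a z t"
    using periodic_strip_lower_bound[where f = a, OF warped_RF_continuous[OF flow]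
        warped_RF_periodic[OF flow] pos_a T'(1,2)] by blast
  obtain \<alpha>b where \<alpha>b: "0 < \<alpha>b" "\<And>z t. t \<in> {0..T'} \<Longrightarrow> \<alpha>b \<le> b z t"
    using periodic_strip_lower_bound[where f = b, OF warped_RF_continuous[OF flow_b]
        warped_RF_periodic[OF flow_b] pos_b T'(1,2)] by blast
  define \<alpha> where "\<alpha> = min \<alpha>a \<alpha>b"
  define N where "N z t = b z t * warped_speed (a z t) (ps \<phi> a z t) (pss \<phi> a z t) (b z t) (ps \<phi> b z t) (c z t) (ps \<phi> c z t)
     - a z t * warped_speed (b z t) (ps \<phi> b z t) (pss \<phi> b z t) (a z t) (ps \<phi> a z t) (c z t) (ps \<phi> c z t)" for z t
  have "a z t / b z t \<le> 1"
  proof (rule max_principle[where T = T' and u = "\<lambda>z t. a z t / b z t" and ut = "\<lambda>z t. N z t / (b z t)\<^sup>2"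
        and K = "8 / \<alpha>\<^sup>2"])
    have "continuous_on (UNIV \<times> {0..<T'}) (\<lambda>p. a (fst p) (snd p))"
      "continuous_on (UNIV \<times> {0..<T'}) (\<lambda>p. b (fst p) (snd p))"
      using warped_RF_continuous[OF flow] warped_RF_continuous[OF flow_b] sub
      by (blast intro: continuous_on_subset)+
    then show "continuous_on (UNIV \<times> {0..<T'}) (\<lambda>p. a (fst p) (snd p) / b (fst p) (snd p))"
      using pos_b sub by (intro continuous_on_divide) (auto simp: less_imp_neq[symmetric])
    show "((\<lambda>\<tau>. a z \<tau> / b z \<tau>) has_real_derivative N z t / (b z t)\<^sup>2) (at t within {0..<T'})"
      if "t \<in> {0..<T'}" for z t
      using DERIV_subset[OF warped_RF_ratio_time_deriv[OF flow] sub] that sub by (auto simp: N_def)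
    show "N z t / (b z t)\<^sup>2 \<le> 8 / \<alpha>\<^sup>2 * (a z t / b z t - 1)"
      if tt: "t \<in> {0<..<T'}" and max: "\<forall>v. a v t / b v t \<le> a z t / b z t" and gt: "1 < a z t / b z t" for z t
    proof (rule ratio_rate_le_linear)
      have tT: "t \<in> {0..<T}" using tt T' by auto
      show "N z t \<le> -4 * ((a z t)\<^sup>2 - (b z t)\<^sup>2) * ((a z t)\<^sup>2 + (b z t)\<^sup>2 - (c z t)\<^sup>2) / (a z t * b z t * (c z t)\<^sup>2)"
        unfolding N_def using warped_RF_ratio_speed_at_max[OF flow tT] max by blast
      show "\<alpha> \<le> a z t" "\<alpha> \<le> b z t" using \<alpha>a(2)[of t z] \<alpha>b(2)[of t z] tt by (auto simp: \<alpha>_def)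
      show "b z t < a z t" "0 < c z t" using gt warped_RF_pos[OF flow tT, of z] by (simp_all add: less_divide_eq)
    qed (use \<alpha>a(1) \<alpha>b(1) in \<open>simp add: \<alpha>_def\<close>)
  qed (use init pos_a pos_b warped_RF_periodic[OF flow] warped_RF_periodic[OF flow_b] T' t in auto)
  then show ?thesis using pos_b[OF t, of z] by simp
qed

lemma warped_RF_ordered:
  assumes flow: "warped_RF T \<phi> a b c" and init: "\<And>z. a z 0 \<le> b z 0 \<and> b z 0 \<le> c z 0"
    and t: "t \<in> {0..<T}"
  shows "a z t \<le> b z t \<and> b z t \<le> c z t"
  using warped_RF_order_preserved[OF flow _ t] warped_RF_order_preserved[OF warped_RF_cycle[OF flow] _ t]
    init by blast

text \<open>At a spatial maximum \<open>c\<^sub>s = 0\<close> and \<open>c\<^sub>s\<^sub>s \<le> 0\<close>, so only the reaction term is left.\<close>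

lemma warped_RF_largest_speed_at_max:
  assumes flow: "warped_RF T \<phi> a b c" and t: "t \<in> {0..<T}"
    and largest: "a z t \<le> c z t" "b z t \<le> c z t" and max: "\<And>y. c y t \<le> c z t"
  shows "c z t * warped_speed (c z t) (ps \<phi> c z t) (pss \<phi> c z t) (a z t) (ps \<phi> a z t) (b z t) (ps \<phi> b z t) \<le> -2"
proof -
  note flow_c = warped_RF_cycle[OF warped_RF_cycle[OF flow]]
  note pos = warped_RF_pos[OF flow t]
  have crit: "ps \<phi> c z t = 0" "\<phi> z t * pss \<phi> c z t \<le> 0"
    using weighted_second_derivative_test[where g = "\<lambda>y. c y t" and h = "\<lambda>y. \<phi> y t",
        OF warped_RF_arclength_derivs(1)[OF flow_c t] _ warped_RF_arclength_derivs(2)[OF flow_c t]]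
      pos max by auto
  then have "pss \<phi> c z t \<le> 0" using pos[of z] by (simp add: mult_le_0_iff)
  moreover have "(a z t)\<^sup>2 * (b z t)\<^sup>2 \<le> ((c z t)\<^sup>2)\<^sup>2 - ((a z t)\<^sup>2 - (b z t)\<^sup>2)\<^sup>2"
    using largest pos[of z] by (intro square_product_le power_mono) auto
  then have "2 / c z t \<le> 2 * (c z t ^ 4 - ((a z t)\<^sup>2 - (b z t)\<^sup>2)\<^sup>2) / (c z t * (a z t)\<^sup>2 * (b z t)\<^sup>2)"
    using pos[of z] by (simp add: field_simps power4_eq_xxxx power2_eq_square)
  ultimately have "warped_speed (c z t) (ps \<phi> c z t) (pss \<phi> c z t) (a z t) (ps \<phi> a z t) (b z t) (ps \<phi> b z t)
      \<le> - 2 / c z t"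
    unfolding warped_speed_def crit(1) by simp
  then show ?thesis using pos[of z] by (simp add: field_simps)
qed

lemma warped_RF_largest_sq_bound:
  assumes flow: "warped_RF T \<phi> a b c"
    and largest: "\<And>z t. t \<in> {0..<T} \<Longrightarrow> a z t \<le> c z t \<and> b z t \<le> c z t"
    and init: "\<And>z. (c z 0)\<^sup>2 \<le> C" and t: "t \<in> {0..<T}"
  shows "(c z t)\<^sup>2 + 4 * t \<le> C"
proof -
  note flow_c = warped_RF_cycle[OF warped_RF_cycle[OF flow]]
  define S where "S z t = warped_speed (c z t) (ps \<phi> c z t) (pss \<phi> c z t) (a z t) (ps \<phi> a z t) (b z t) (ps \<phi> b z t)" for z t
  show ?thesis
  proof (rule max_principle[where u = "\<lambda>z t. (c z t)\<^sup>2 + 4 * t" and ut = "\<lambda>z t. 2 * c z t * S z t + 4"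
        and K = 0])
    show "continuous_on (UNIV \<times> {0..<T}) (\<lambda>p. (c (fst p) (snd p))\<^sup>2 + 4 * snd p)"
      by (intro continuous_intros warped_RF_continuous[OF flow_c])
    show "((\<lambda>\<tau>. (c z \<tau>)\<^sup>2 + 4 * \<tau>) has_real_derivative 2 * c z t * S z t + 4) (at t within {0..<T})"
      if "t \<in> {0..<T}" for z t
      unfolding S_def by (rule derivative_eq_intros warped_RF_time_deriv[OF flow_c that] refl | simp)+
    show "2 * c z t * S z t + 4 \<le> 0 * ((c z t)\<^sup>2 + 4 * t - C)"
      if tt: "t \<in> {0<..<T}" and max: "\<forall>y. (c y t)\<^sup>2 + 4 * t \<le> (c z t)\<^sup>2 + 4 * t" for z t
    proof -
      have tT: "t \<in> {0..<T}" using tt by auto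
      have "c y t \<le> c z t" for y
      proof (rule power2_le_imp_le)
        show "(c y t)\<^sup>2 \<le> (c z t)\<^sup>2" using max by simp
      qed (use warped_RF_pos[OF flow tT, of z] in simp)
      then have "c z t * S z t \<le> -2"
        unfolding S_def using largest[OF tT, of z] by (intro warped_RF_largest_speed_at_max[OF flow tT]) auto
      then show ?thesis by simp
    qed
  qed (use init warped_RF_periodic[OF flow_c] t in auto)
qed

lemma warped_RF_ratio_bound:
  assumes flow: "warped_RF T \<phi> a b c"
    and largest: "\<And>z t. t \<in> {0..<T} \<Longrightarrow> a z t \<le> c z t \<and> b z t \<le> c z t"
    and shrink: "\<And>z t. t \<in> {0..<T} \<Longrightarrow> (c z t)\<^sup>2 + 4 * t \<le> C"
    and init: "\<And>z. c z 0 / a z 0 \<le> L" and t: "t \<in> {0..<T}"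
  shows "(c z t / a z t)\<^sup>2 - 1 \<le> (L\<^sup>2 - 1) * (1 - 4 * t / C)\<^sup>2"
proof -
  note flow_c = warped_RF_cycle[OF warped_RF_cycle[OF flow]]
  note pos = warped_RF_pos[OF flow]
  define N where "N z t = a z t * warped_speed (c z t) (ps \<phi> c z t) (pss \<phi> c z t) (a z t) (ps \<phi> a z t) (b z t) (ps \<phi> b z t)
     - c z t * warped_speed (a z t) (ps \<phi> a z t) (pss \<phi> a z t) (c z t) (ps \<phi> c z t) (b z t) (ps \<phi> b z t)" for z t
  show ?thesis
  proof (rule max_principle_sq_excess_decay[where r = "\<lambda>z t. c z t / a z t" and R = "\<lambda>z t. N z t / (a z t)\<^sup>2"])
    show "continuous_on (UNIV \<times> {0..<T}) (\<lambda>p. c (fst p) (snd p) / a (fst p) (snd p))"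
      using pos by (intro continuous_on_divide warped_RF_continuous[OF flow] warped_RF_continuous[OF flow_c])
        (auto simp: less_imp_neq[symmetric])
    show "((\<lambda>\<tau>. c z \<tau> / a z \<tau>) has_real_derivative N z t / (a z t)\<^sup>2) (at t within {0..<T})"
      if "t \<in> {0..<T}" for z t
      using warped_RF_ratio_time_deriv[OF flow_c that, of z] unfolding N_def .
    show "0 < C - 4 * t" if "t \<in> {0..<T}" for t
    proof -
      have "0 < (c z t)\<^sup>2" using pos[OF that, of z] by simp
      then show ?thesis using shrink[OF that, of z] by linarith
    qed
    show "c z t / a z t * (N z t / (a z t)\<^sup>2) \<le> -4 * ((c z t / a z t)\<^sup>2 - 1) / (C - 4 * t)"
      if tt: "t \<in> {0<..<T}" and max: "\<forall>y. c y t / a y t \<le> c z t / a z t" for z t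
    proof (rule largest_ratio_rate_bound)
      have tT: "t \<in> {0..<T}" using tt by auto
      show "N z t \<le> -4 * ((c z t)\<^sup>2 - (a z t)\<^sup>2) * ((c z t)\<^sup>2 + (a z t)\<^sup>2 - (b z t)\<^sup>2) / (c z t * a z t * (b z t)\<^sup>2)"
        unfolding N_def using warped_RF_ratio_speed_at_max[OF flow_c tT] max by blast
      show "0 < a z t" "0 < b z t" "a z t \<le> c z t" "b z t \<le> c z t" "(c z t)\<^sup>2 \<le> C - 4 * t"
        using pos[OF tT, of z] largest[OF tT, of z] shrink[OF tT, of z] by auto
    qed
  qed (use init pos warped_RF_periodic[OF flow] warped_RF_periodic[OF flow_c] t in auto)
qed

lemma warped_RF_le_SUP_initial:
  assumes flow: "warped_RF T \<phi> a b c" and T: "0 < T"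
  shows "(c y 0)\<^sup>2 \<le> (SUP z. c z 0)\<^sup>2" and "c y 0 / a y 0 \<le> (SUP z. c z 0 / a z 0)"
proof -
  note flow_c = warped_RF_cycle[OF warped_RF_cycle[OF flow]]
  have T0: "0 \<in> {0..<T}" using T by simp
  have cont_c: "continuous_on UNIV (\<lambda>z. c z 0)" and cont_a: "continuous_on UNIV (\<lambda>z. a z 0)"
    using continuous_on_slice[OF warped_RF_continuous[OF flow_c] T0]
      continuous_on_slice[OF warped_RF_continuous[OF flow] T0] by blast+
  have "c y 0 \<le> (SUP z. c z 0)"
    using periodic_bdd_above[OF cont_c warped_RF_periodic[OF flow_c]] by (rule cSUP_upper[rotated]) simp
  then show "(c y 0)\<^sup>2 \<le> (SUP z. c z 0)\<^sup>2"
    using warped_RF_pos[OF flow T0, of y] by (intro power_mono) auto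
  have "continuous_on UNIV (\<lambda>z. c z 0 / a z 0)"
    using cont_c cont_a warped_RF_pos[OF flow T0] by (intro continuous_on_divide) (auto simp: less_imp_neq[symmetric])
  then have "bdd_above (range (\<lambda>z. c z 0 / a z 0))"
    by (rule periodic_bdd_above) (simp add: warped_RF_periodic[OF flow] warped_RF_periodic[OF flow_c])
  then show "c y 0 / a y 0 \<le> (SUP z. c z 0 / a z 0)" by (rule cSUP_upper[rotated]) simp
qed

theorem lemma4p5:
  fixes T L :: real and \<phi> a b c :: "real \<Rightarrow> real \<Rightarrow> real"
  assumes flow: "warped_RF T \<phi> a b c"
    and init_order: "\<forall>z. 0 < a z 0 \<and> a z 0 \<le> b z 0 \<and> b z 0 \<le> c z 0"
    and lam: "1 \<le> L"
    and ratio_lower: "1 \<le> (SUP z. c z 0 / a z 0)"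
    and ratio_upper: "(SUP z. c z 0 / a z 0) \<le> L"
  shows "\<forall>z. \<forall>t\<in>{0..<T}.
           1 \<le> (c z t)\<^sup>2 / (a z t)\<^sup>2 \<and>
           (c z t)\<^sup>2 / (a z t)\<^sup>2
             \<le> exp (L\<^sup>2 - 1) * (L\<^sup>2 - 1) * (1 - 4 * t / (SUP y. c y 0)\<^sup>2)\<^sup>2 + 1"
proof (intro allI ballI)
  fix z t assume t: "t \<in> {0..<T}"
  then have T: "0 < T" by simp
  have largest: "a y \<tau> \<le> c y \<tau> \<and> b y \<tau> \<le> c y \<tau>" if "\<tau> \<in> {0..<T}" for y \<tau>
    using warped_RF_ordered[OF flow _ that] init_order by (meson order_trans)
  have shrink: "(c y \<tau>)\<^sup>2 + 4 * \<tau> \<le> (SUP y. c y 0)\<^sup>2" if "\<tau> \<in> {0..<T}" for y \<tau>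
    using warped_RF_largest_sq_bound[OF flow largest warped_RF_le_SUP_initial(1)[OF flow T] that] .
  have "c y 0 / a y 0 \<le> L" for y
    using warped_RF_le_SUP_initial(2)[OF flow T] ratio_upper by (rule order_trans)
  then have "(c z t / a z t)\<^sup>2 - 1 \<le> (L\<^sup>2 - 1) * (1 - 4 * t / (SUP y. c y 0)\<^sup>2)\<^sup>2"
    using warped_RF_ratio_bound[OF flow largest shrink _ t] by blast
  also have "\<dots> \<le> exp (L\<^sup>2 - 1) * (L\<^sup>2 - 1) * (1 - 4 * t / (SUP y. c y 0)\<^sup>2)\<^sup>2"
  proof -
    have "0 \<le> L\<^sup>2 - 1" using lam by (simp add: one_le_power)
    then have "L\<^sup>2 - 1 \<le> exp (L\<^sup>2 - 1) * (L\<^sup>2 - 1)" using mult_right_mono[of 1 "exp (L\<^sup>2 - 1)"] by simp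
    then show ?thesis by (rule mult_right_mono) simp
  qed
  finally show "1 \<le> (c z t)\<^sup>2 / (a z t)\<^sup>2 \<and>
      (c z t)\<^sup>2 / (a z t)\<^sup>2 \<le> exp (L\<^sup>2 - 1) * (L\<^sup>2 - 1) * (1 - 4 * t / (SUP y. c y 0)\<^sup>2)\<^sup>2 + 1"
    using largest[OF t] warped_RF_pos[OF flow t, of z] by (simp add: power_divide power_mono)
qed

end
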